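(* Let $\mathcal P$ be a Fitting program over a bilattice $\mathcal B$. Then $Fix^{\mathcal U}_{\mathcal U}\le_k Fix^{\mathcal F}_{\mathcal U}\otimes Fix^{\mathcal T}_{\mathcal U}$.
   Context: A bilattice $\langle\mathcal B,\le_t,\le_k\rangle$ is a nonempty set with two partial orders, each making $\mathcal B$ a lattice with top and bottom. Under $\le_t$, meet and join are $\wedge,\vee$ (infinitary $\bigwedge,\bigvee$), bottom $\mathcal F$, top $\mathcal T$; under $\le_k$, meet and join are $\otimes,\oplus$ (infinitary $\bigotimes,\bigoplus$), bottom $\mathcal U$, top $\mathcal I$. Standing assumptions: $\mathcal B$ is complete for both orders, infinitely distributive, satisfies the infinitary interlacing conditions, and has a negation $\neg$ (an involution reversing $\le_t$ and preserving $\le_k$). A formula is built from literals ($A$ or $\neg A$) and elements of $\mathcal B$ using $\wedge,\vee,\otimes,\oplus,\exists,\forall$ (with built-in predicate $equal$). A clause is $P(x_1,\dots,x_n)\leftarrow\phi(x_1,\dots,x_n)$ with the body's free variables among $x_1,\dots,x_n$. A Fitting program is a finite set of clauses with no predicate letter heading more than one clause; Inst-$\mathcal P$ is its set of ground instances. $\mathcal V(\mathcal B)$: maps from ground atoms to $\mathcal B$ with pointwise orders/operations. Valuations extend to closed formulas compositionally ($v(\beta)=\beta$, connectives pointwise, $\exists$ as $\bigvee$, $\forall$ as $\bigwedge$ over closed-term instances, $v(equal(s,t))=\mathcal T$ if $s=t$ else $\mathcal F$). The contrajoin $v\bigtriangleup w$ evaluates likewise but gives $A$ the value $v(A)$ and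 $\neg A$ the value $\neg w(A)$. For $\alpha\in\{\mathcal F,\mathcal T,\mathcal U,\mathcal I\}$: $\Psi_{\mathcal P}^{\alpha}(v,w)(A)=\alpha$ if $A$ heads no member of Inst-$\mathcal P$, and $=(v\bigtriangleup w)(B)$ if $A\leftarrow B\in$ Inst-$\mathcal P$. $\Psi'^{\alpha}_{\mathcal P}(v)$ is the $\le_t$-least (resp. $\le_t$-greatest, $\le_k$-least, $\le_k$-greatest) fixpoint of $x\mapsto\Psi_{\mathcal P}^{\alpha}(x,v)$ when $\alpha=\mathcal F$ (resp. $\mathcal T,\mathcal U,\mathcal I$), obtained as the limit of the transfinite iteration from the constant valuation $\alpha$. $Fix^{\alpha}_{\mathcal U}$ denotes the $\le_k$-least fixpoint of $\Psi'^{\alpha}_{\mathcal P}$. *)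

theory Defs
  imports Main
begin

record 'b bilattice =
  tle :: "'b \<Rightarrow> 'b \<Rightarrow> bool"
  kle :: "'b \<Rightarrow> 'b \<Rightarrow> bool"
  bneg :: "'b \<Rightarrow> 'b"

definition is_lub :: "('a \<Rightarrow> 'a \<Rightarrow> bool) \<Rightarrow> 'a set \<Rightarrow> 'a \<Rightarrow> bool" where
  "is_lub le A x \<longleftrightarrow> (\<forall>a\<in>A. le a x) \<and> (\<forall>y. (\<forall>a\<in>A. le a y) \<longrightarrow> le x y)"

definition is_glb :: "('a \<Rightarrow> 'a \<Rightarrow> bool) \<Rightarrow> 'a set \<Rightarrow> 'a \<Rightarrow> bool" where
  "is_glb le A x \<longleftrightarrow> (\<forall>a\<in>A. le x a) \<and> (\<forall>y. (\<forall>a\<in>A. le y a) \<longrightarrow> le y x)"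

definition lub :: "('a \<Rightarrow> 'a \<Rightarrow> bool) \<Rightarrow> 'a set \<Rightarrow> 'a" where
  "lub le A = (THE x. is_lub le A x)"

definition glb :: "('a \<Rightarrow> 'a \<Rightarrow> bool) \<Rightarrow> 'a set \<Rightarrow> 'a" where
  "glb le A = (THE x. is_glb le A x)"

definition partial_order_rel :: "('a \<Rightarrow> 'a \<Rightarrow> bool) \<Rightarrow> bool" where
  "partial_order_rel le \<longleftrightarrow> (\<forall>x. le x x) \<and> (\<forall>x y. le x y \<and> le y x \<longrightarrow> x = y)
      \<and> (\<forall>x y z. le x y \<and> le y z \<longrightarrow> le x z)"

definition complete_lattice_rel :: "('a \<Rightarrow> 'a \<Rightarrow> bool) \<Rightarrow> bool" where
  "complete_lattice_rel le \<longleftrightarrow> partial_order_rel le \<and>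
      (\<forall>A. (\<exists>x. is_lub le A x) \<and> (\<exists>x. is_glb le A x))"

definition tMeet :: "'b bilattice \<Rightarrow> 'b set \<Rightarrow> 'b" where "tMeet B A = glb (tle B) A"
definition tJoin :: "'b bilattice \<Rightarrow> 'b set \<Rightarrow> 'b" where "tJoin B A = lub (tle B) A"
definition kMeet :: "'b bilattice \<Rightarrow> 'b set \<Rightarrow> 'b" where "kMeet B A = glb (kle B) A"
definition kJoin :: "'b bilattice \<Rightarrow> 'b set \<Rightarrow> 'b" where "kJoin B A = lub (kle B) A"

definition tmeet :: "'b bilattice \<Rightarrow> 'b \<Rightarrow> 'b \<Rightarrow> 'b" where "tmeet B a b = tMeet B {a, b}"
definition tjoin :: "'b bilattice \<Rightarrow> 'b \<Rightarrow> 'b \<Rightarrow> 'b" where "tjoin B a b = tJoin B {a, b}"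
definition kmeet :: "'b bilattice \<Rightarrow> 'b \<Rightarrow> 'b \<Rightarrow> 'b" where "kmeet B a b = kMeet B {a, b}"
definition kjoin :: "'b bilattice \<Rightarrow> 'b \<Rightarrow> 'b \<Rightarrow> 'b" where "kjoin B a b = kJoin B {a, b}"

definition bF :: "'b bilattice \<Rightarrow> 'b" where "bF B = tJoin B {}"
definition bT :: "'b bilattice \<Rightarrow> 'b" where "bT B = tMeet B {}"
definition bU :: "'b bilattice \<Rightarrow> 'b" where "bU B = kJoin B {}"
definition bI :: "'b bilattice \<Rightarrow> 'b" where "bI B = kMeet B {}"

text \<open>Infinitary distributivity of a binary operation over an infinitary one
  (for nonempty families; the finitary laws are the two-element instances).\<close>
definition distrib_over :: "('b \<Rightarrow> 'b \<Rightarrow> 'b) \<Rightarrow> ('b set \<Rightarrow> 'b) \<Rightarrow> bool" where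
  "distrib_over f G \<longleftrightarrow> (\<forall>a A. A \<noteq> {} \<longrightarrow> f a (G A) = G (f a ` A))"

definition infinitely_distributive :: "'b bilattice \<Rightarrow> bool" where
  "infinitely_distributive B \<longleftrightarrow>
     distrib_over (tmeet B) (tJoin B) \<and> distrib_over (tmeet B) (kMeet B) \<and> distrib_over (tmeet B) (kJoin B) \<and>
     distrib_over (tjoin B) (tMeet B) \<and> distrib_over (tjoin B) (kMeet B) \<and> distrib_over (tjoin B) (kJoin B) \<and>
     distrib_over (kmeet B) (tMeet B) \<and> distrib_over (kmeet B) (tJoin B) \<and> distrib_over (kmeet B) (kJoin B) \<and>
     distrib_over (kjoin B) (tMeet B) \<and> distrib_over (kjoin B) (tJoin B) \<and> distrib_over (kjoin B) (kMeet B)"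

text \<open>Monotonicity of an infinitary operation w.r.t. an order, for arbitrary families
  (a family of pairs (a_i, b_i) is represented by the set R of the pairs).\<close>
definition mono_fam :: "('b \<Rightarrow> 'b \<Rightarrow> bool) \<Rightarrow> ('b set \<Rightarrow> 'b) \<Rightarrow> bool" where
  "mono_fam le G \<longleftrightarrow> (\<forall>R. (\<forall>(x, y)\<in>R. le x y) \<longrightarrow> le (G (fst ` R)) (G (snd ` R)))"

definition infinitely_interlaced :: "'b bilattice \<Rightarrow> bool" where
  "infinitely_interlaced B \<longleftrightarrow>
     mono_fam (tle B) (tMeet B) \<and> mono_fam (tle B) (tJoin B) \<and>
     mono_fam (tle B) (kMeet B) \<and> mono_fam (tle B) (kJoin B) \<and>
     mono_fam (kle B) (tMeet B) \<and> mono_fam (kle B) (tJoin B) \<and>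
     mono_fam (kle B) (kMeet B) \<and> mono_fam (kle B) (kJoin B)"

definition is_negation :: "'b bilattice \<Rightarrow> bool" where
  "is_negation B \<longleftrightarrow> (\<forall>a. bneg B (bneg B a) = a) \<and>
     (\<forall>a b. tle B a b \<longrightarrow> tle B (bneg B b) (bneg B a)) \<and>
     (\<forall>a b. kle B a b \<longrightarrow> kle B (bneg B a) (bneg B b))"

definition std_bilattice :: "'b bilattice \<Rightarrow> bool" where
  "std_bilattice B \<longleftrightarrow> complete_lattice_rel (tle B) \<and> complete_lattice_rel (kle B) \<and>
     infinitely_distributive B \<and> infinitely_interlaced B \<and> is_negation B"

datatype 'f trm = Var nat | Fn 'f "'f trm list"

fun closed_trm :: "'f trm \<Rightarrow> bool" where
  "closed_trm (Var n) = False"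
| "closed_trm (Fn f ts) = (\<forall>t\<in>set ts. closed_trm t)"

fun tsubst :: "(nat \<Rightarrow> 'f trm) \<Rightarrow> 'f trm \<Rightarrow> 'f trm" where
  "tsubst e (Var n) = e n"
| "tsubst e (Fn f ts) = Fn f (map (tsubst e) ts)"

fun tvars :: "'f trm \<Rightarrow> nat set" where
  "tvars (Var n) = {n}"
| "tvars (Fn f ts) = (\<Union>t\<in>set ts. tvars t)"

datatype ('p, 'f, 'b) fm =
    PosLit 'p "'f trm list"
  | NegLit 'p "'f trm list"
  | PosEq "'f trm" "'f trm"
  | NegEq "'f trm" "'f trm"
  | Cst 'b
  | Conj "('p, 'f, 'b) fm" "('p, 'f, 'b) fm"
  | Disj "('p, 'f, 'b) fm" "('p, 'f, 'b) fm"
  | KMeetF "('p, 'f, 'b) fm" "('p, 'f, 'b) fm"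
  | KJoinF "('p, 'f, 'b) fm" "('p, 'f, 'b) fm"
  | Ex nat "('p, 'f, 'b) fm"
  | All nat "('p, 'f, 'b) fm"

fun fv :: "('p, 'f, 'b) fm \<Rightarrow> nat set" where
  "fv (PosLit p ts) = (\<Union>t\<in>set ts. tvars t)"
| "fv (NegLit p ts) = (\<Union>t\<in>set ts. tvars t)"
| "fv (PosEq s t) = tvars s \<union> tvars t"
| "fv (NegEq s t) = tvars s \<union> tvars t"
| "fv (Cst b) = {}"
| "fv (Conj a b) = fv a \<union> fv b"
| "fv (Disj a b) = fv a \<union> fv b"
| "fv (KMeetF a b) = fv a \<union> fv b"
| "fv (KJoinF a b) = fv a \<union> fv b"
| "fv (Ex x a) = fv a - {x}"
| "fv (All x a) = fv a - {x}"

text \<open>Ground atoms are pairs (P, ts) with ts closed; valuations are maps from atoms to 'b.\<close>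
type_synonym ('p, 'f, 'b) valuation = "('p \<times> 'f trm list) \<Rightarrow> 'b"

text \<open>For closed formulas this is
  (v \<triangle> w)(\<phi>); for a formula with free variables it evaluates the corresponding instance.\<close>
fun ceval :: "'b bilattice \<Rightarrow> ('p, 'f, 'b) valuation \<Rightarrow> ('p, 'f, 'b) valuation
              \<Rightarrow> (nat \<Rightarrow> 'f trm) \<Rightarrow> ('p, 'f, 'b) fm \<Rightarrow> 'b" where
  "ceval B v w e (PosLit p ts) = v (p, map (tsubst e) ts)"
| "ceval B v w e (NegLit p ts) = bneg B (w (p, map (tsubst e) ts))"
| "ceval B v w e (PosEq s t) = (if tsubst e s = tsubst e t then bT B else bF B)"
| "ceval B v w e (NegEq s t) = bneg B (if tsubst e s = tsubst e t then bT B else bF B)"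
| "ceval B v w e (Cst b) = b"
| "ceval B v w e (Conj a b) = tmeet B (ceval B v w e a) (ceval B v w e b)"
| "ceval B v w e (Disj a b) = tjoin B (ceval B v w e a) (ceval B v w e b)"
| "ceval B v w e (KMeetF a b) = kmeet B (ceval B v w e a) (ceval B v w e b)"
| "ceval B v w e (KJoinF a b) = kjoin B (ceval B v w e a) (ceval B v w e b)"
| "ceval B v w e (Ex x a) = tJoin B {ceval B v w (e(x := t)) a | t. closed_trm t}"
| "ceval B v w e (All x a) = tMeet B {ceval B v w (e(x := t)) a | t. closed_trm t}"

text \<open>A clause P(x1,...,xn) \<leftarrow> \<phi> is a triple (P, [x1,...,xn], \<phi>).\<close>
type_synonym ('p, 'f, 'b) clause = "'p \<times> nat list \<times> ('p, 'f, 'b) fm"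

definition fitting_program :: "('p, 'f, 'b) clause set \<Rightarrow> bool" where
  "fitting_program P \<longleftrightarrow> finite P \<and>
     (\<forall>(p, xs, \<phi>)\<in>P. distinct xs \<and> fv \<phi> \<subseteq> set xs) \<and>
     (\<forall>c1\<in>P. \<forall>c2\<in>P. fst c1 = fst c2 \<longrightarrow> c1 = c2)"

definition closed_env :: "(nat \<Rightarrow> 'f trm) \<Rightarrow> bool" where
  "closed_env e \<longleftrightarrow> (\<forall>n. closed_trm (e n))"

definition heads_instance :: "('p, 'f, 'b) clause set \<Rightarrow> ('p \<times> 'f trm list)
      \<Rightarrow> ('p, 'f, 'b) clause \<Rightarrow> (nat \<Rightarrow> 'f trm) \<Rightarrow> bool" where
  "heads_instance P A c e \<longleftrightarrow> c \<in> P \<and> closed_env e \<and> A = (fst c, map e (fst (snd c)))"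

datatype tval = CF | CT | CU | CI

definition tval_of :: "'b bilattice \<Rightarrow> tval \<Rightarrow> 'b" where
  "tval_of B \<alpha> = (case \<alpha> of CF \<Rightarrow> bF B | CT \<Rightarrow> bT B | CU \<Rightarrow> bU B | CI \<Rightarrow> bI B)"

definition Psi :: "'b bilattice \<Rightarrow> ('p, 'f, 'b) clause set \<Rightarrow> tval
      \<Rightarrow> ('p, 'f, 'b) valuation \<Rightarrow> ('p, 'f, 'b) valuation \<Rightarrow> ('p, 'f, 'b) valuation" where
  "Psi B P \<alpha> v w A =
     (if \<exists>c e. heads_instance P A c e
      then (let (c, e) = (SOME (c, e). heads_instance P A c e) in ceval B v w e (snd (snd c)))
      else tval_of B \<alpha>)"

definition vle :: "('b \<Rightarrow> 'b \<Rightarrow> bool) \<Rightarrow> ('a \<Rightarrow> 'b) \<Rightarrow> ('a \<Rightarrow> 'b) \<Rightarrow> bool" where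
  "vle le v w \<longleftrightarrow> (\<forall>A. le (v A) (w A))"

definition least_fp :: "('a \<Rightarrow> 'a \<Rightarrow> bool) \<Rightarrow> ('a \<Rightarrow> 'a) \<Rightarrow> 'a" where
  "least_fp le f = (THE x. f x = x \<and> (\<forall>y. f y = y \<longrightarrow> le x y))"

definition greatest_fp :: "('a \<Rightarrow> 'a \<Rightarrow> bool) \<Rightarrow> ('a \<Rightarrow> 'a) \<Rightarrow> 'a" where
  "greatest_fp le f = (THE x. f x = x \<and> (\<forall>y. f y = y \<longrightarrow> le y x))"

definition Psi' :: "'b bilattice \<Rightarrow> ('p, 'f, 'b) clause set \<Rightarrow> tval
      \<Rightarrow> ('p, 'f, 'b) valuation \<Rightarrow> ('p, 'f, 'b) valuation" where
  "Psi' B P \<alpha> v = (case \<alpha> of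
       CF \<Rightarrow> least_fp (vle (tle B)) (\<lambda>x. Psi B P CF x v)
     | CT \<Rightarrow> greatest_fp (vle (tle B)) (\<lambda>x. Psi B P CT x v)
     | CU \<Rightarrow> least_fp (vle (kle B)) (\<lambda>x. Psi B P CU x v)
     | CI \<Rightarrow> greatest_fp (vle (kle B)) (\<lambda>x. Psi B P CI x v))"

definition FixU :: "'b bilattice \<Rightarrow> ('p, 'f, 'b) clause set \<Rightarrow> tval \<Rightarrow> ('p, 'f, 'b) valuation" where
  "FixU B P \<alpha> = least_fp (vle (kle B)) (Psi' B P \<alpha>)"

end

theory Submission
  imports Defs
begin

text \<open>By interlacing, the contrajoin evaluation and hence Psi^\<alpha>(x, v) are k-monotone in x and v.
  Computing Psi'^\<alpha>(v) and Psi'^\<alpha>(v') by iterating x \<mapsto> Psi^\<alpha>(x, v) and x \<mapsto> Psi^\<alpha>(x, v')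
  side by side, every stage, and so the limit, keeps the first k-below the second: Psi'^\<alpha> is
  k-monotone and Fix^\<alpha>_U exists. Let \<Phi> = Fix^\<alpha>_U, so Psi^\<alpha>(\<Phi>, \<Phi>) = \<Phi>. Since U is the k-bottom,
  Psi^U(\<Phi>, \<Phi>) \<le>_k Psi^\<alpha>(\<Phi>, \<Phi>) = \<Phi>, so \<Phi> is a k-prefixpoint of Psi^U(-, \<Phi>), giving
  Psi'^U(\<Phi>) \<le>_k \<Phi>; thus \<Phi> is a k-prefixpoint of Psi'^U and Fix^U_U \<le>_k \<Phi>, for every \<alpha>.\<close>

lemma partial_order_rel_refl: "partial_order_rel le \<Longrightarrow> le x x"
  unfolding partial_order_rel_def by blast

lemma partial_order_rel_antisym: "partial_order_rel le \<Longrightarrow> le x y \<Longrightarrow> le y x \<Longrightarrow> x = y"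
  unfolding partial_order_rel_def by blast

lemma partial_order_rel_trans: "partial_order_rel le \<Longrightarrow> le x y \<Longrightarrow> le y z \<Longrightarrow> le x z"
  unfolding partial_order_rel_def by blast

lemma partial_order_rel_converse: "partial_order_rel le \<Longrightarrow> partial_order_rel (\<lambda>x y. le y x)"
  unfolding partial_order_rel_def by blast

lemma partial_order_rel_vle: "partial_order_rel le \<Longrightarrow> partial_order_rel (vle le)"
  unfolding partial_order_rel_def vle_def by (metis ext)

lemma vle_converse: "vle (\<lambda>x y. le y x) = (\<lambda>v w. vle le w v)"
  unfolding vle_def by blast

lemma is_lub_converse: "is_lub (\<lambda>x y. le y x) S x \<longleftrightarrow> is_glb le S x"
  unfolding is_lub_def is_glb_def by blast

lemma complete_lattice_rel_is_lub:
  assumes "complete_lattice_rel le"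
  shows "is_lub le S (lub le S)"
proof -
  have po: "partial_order_rel le" and ex: "\<exists>x. is_lub le S x"
    using assms unfolding complete_lattice_rel_def by blast+
  have "x = y" if "is_lub le S x" "is_lub le S y" for x y
    using that partial_order_rel_antisym[OF po] unfolding is_lub_def by blast
  with ex show ?thesis unfolding lub_def by (metis theI)
qed

lemma complete_lattice_rel_is_glb:
  assumes "complete_lattice_rel le"
  shows "is_glb le S (glb le S)"
proof -
  have po: "partial_order_rel le" and ex: "\<exists>x. is_glb le S x"
    using assms unfolding complete_lattice_rel_def by blast+
  have "x = y" if "is_glb le S x" "is_glb le S y" for x y
    using that partial_order_rel_antisym[OF po] unfolding is_glb_def by blast
  with ex show ?thesis unfolding glb_def by (metis theI)
qed

lemma greatest_fp_eq_least_fp_converse: "greatest_fp le f = least_fp (\<lambda>x y. le y x) f"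
  unfolding greatest_fp_def least_fp_def ..

definition pointwise :: "('b set \<Rightarrow> 'b) \<Rightarrow> ('a \<Rightarrow> 'b) set \<Rightarrow> 'a \<Rightarrow> 'b" where
  "pointwise G S = (\<lambda>A. G ((\<lambda>v. v A) ` S))"

lemma is_lub_pointwise: "(\<And>S. is_lub le S (G S)) \<Longrightarrow> is_lub (vle le) S (pointwise G S)"
  unfolding is_lub_def vle_def pointwise_def by fastforce

lemma mono_fam_pointwise:
  fixes G :: "'b set \<Rightarrow> 'b"
  assumes "mono_fam le G"
  shows "mono_fam (vle le) (pointwise G)"
  unfolding mono_fam_def vle_def pointwise_def
proof (intro allI impI)
  fix R :: "(('a \<Rightarrow> 'b) \<times> ('a \<Rightarrow> 'b)) set" and A
  assume "\<forall>(v, w)\<in>R. \<forall>A. le (v A) (w A)"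
  then have "\<forall>(x, y)\<in>(\<lambda>(v, w). (v A, w A)) ` R. le x y" by auto
  then have "le (G (fst ` (\<lambda>(v, w). (v A, w A)) ` R)) (G (snd ` (\<lambda>(v, w). (v A, w A)) ` R))"
    using assms unfolding mono_fam_def by blast
  then show "le (G ((\<lambda>v. v A) ` fst ` R)) (G ((\<lambda>v. v A) ` snd ` R))"
    by (simp add: image_image case_prod_beta)
qed

lemma mono_fam_pair: "mono_fam le G \<Longrightarrow> le a a' \<Longrightarrow> le b b' \<Longrightarrow> le (G {a, b}) (G {a', b'})"
  unfolding mono_fam_def by (drule spec[of _ "{(a, a'), (b, b')}"]) auto

lemma mono_fam_image:
  assumes "mono_fam le G" and "\<And>t. P t \<Longrightarrow> le (h t) (h' t)"
  shows "le (G {h t | t. P t}) (G {h' t | t. P t})"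
proof -
  have "le (G (fst ` (\<lambda>t. (h t, h' t)) ` Collect P)) (G (snd ` (\<lambda>t. (h t, h' t)) ` Collect P))"
    using assms unfolding mono_fam_def by auto
  then show ?thesis by (simp add: image_image setcompr_eq_image)
qed

text \<open>Simultaneous transfinite iteration of f and g: limit stages are lubs of arbitrary sets of
  earlier stages, so no ordinals are needed, and the lub of all stages is the least fixpoint.\<close>
inductive_set joint_iterates :: "('a \<Rightarrow> 'a) \<Rightarrow> ('a \<Rightarrow> 'a) \<Rightarrow> ('a set \<Rightarrow> 'a) \<Rightarrow> ('a \<times> 'a) set"
  for f g L where
  step: "(x, y) \<in> joint_iterates f g L \<Longrightarrow> (f x, g y) \<in> joint_iterates f g L"
| lub: "\<forall>p\<in>R. p \<in> joint_iterates f g L \<Longrightarrow> (L (fst ` R), L (snd ` R)) \<in> joint_iterates f g L"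

lemma joint_iterates_swap: "p \<in> joint_iterates f g L \<Longrightarrow> prod.swap p \<in> joint_iterates g f L"
proof (induction rule: joint_iterates.induct)
  case (step x y)
  then show ?case by (simp add: joint_iterates.step)
next
  case (lub R)
  then have "\<forall>p\<in>prod.swap ` R. p \<in> joint_iterates g f L" by auto
  from joint_iterates.lub[OF this] show ?case by (simp add: image_image)
qed

lemma snd_image_joint_iterates: "snd ` joint_iterates f g L = fst ` joint_iterates g f L"
proof
  show "snd ` joint_iterates f g L \<subseteq> fst ` joint_iterates g f L"
    using joint_iterates_swap[of _ f g L] by force
  show "fst ` joint_iterates g f L \<subseteq> snd ` joint_iterates f g L"
    using joint_iterates_swap[of _ g f L] by force
qed

definition lfp_approximant :: "('a \<Rightarrow> 'a \<Rightarrow> bool) \<Rightarrow> ('a \<Rightarrow> 'a) \<Rightarrow> 'a \<Rightarrow> bool" where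
  "lfp_approximant le f x \<longleftrightarrow> le x (f x) \<and> (\<forall>z. le (f z) z \<longrightarrow> le x z)"

lemma least_fp_eqI:
  assumes po: "partial_order_rel le" and a: "lfp_approximant le f a" and "le (f a) a"
  shows "least_fp le f = a"
  unfolding least_fp_def
proof (rule the_equality)
  have "f a = a"
    using a \<open>le (f a) a\<close> partial_order_rel_antisym[OF po] unfolding lfp_approximant_def by blast
  then show "f a = a \<and> (\<forall>y. f y = y \<longrightarrow> le a y)"
    using a partial_order_rel_refl[OF po] unfolding lfp_approximant_def by metis
  fix x assume "f x = x \<and> (\<forall>y. f y = y \<longrightarrow> le x y)"
  with \<open>f a = a\<close> a show "x = a"
    using partial_order_rel_antisym[OF po] partial_order_rel_refl[OF po]
    unfolding lfp_approximant_def by metis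
qed

context
  fixes le :: "'a \<Rightarrow> 'a \<Rightarrow> bool" and L :: "'a set \<Rightarrow> 'a"
  assumes po: "partial_order_rel le" and L_lub: "\<And>S. is_lub le S (L S)"
begin

lemma lfp_approximant_step:
  assumes "monotone le le f" and "lfp_approximant le f x"
  shows "lfp_approximant le f (f x)"
  using assms partial_order_rel_trans[OF po] unfolding lfp_approximant_def monotone_def by meson

lemma lfp_approximant_lub:
  assumes "monotone le le f" and "\<And>x. x \<in> S \<Longrightarrow> lfp_approximant le f x"
  shows "lfp_approximant le f (L S)"
proof -
  have "le x (f (L S))" if "x \<in> S" for x
  proof -
    have "le x (f x)" using assms(2)[OF that] unfolding lfp_approximant_def by blast
    moreover have "le (f x) (f (L S))"
      using L_lub that monotoneD[OF assms(1)] unfolding is_lub_def by blast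
    ultimately show ?thesis using partial_order_rel_trans[OF po] by blast
  qed
  then show ?thesis
    using L_lub assms(2) unfolding is_lub_def lfp_approximant_def by blast
qed

lemma joint_iterates_lfp_approximant:
  assumes "monotone le le f" and "p \<in> joint_iterates f g L"
  shows "lfp_approximant le f (fst p)"
  using assms(2)
proof (induction rule: joint_iterates.induct)
  case (step x y)
  then show ?case using lfp_approximant_step[OF assms(1)] by simp
next
  case (lub R)
  have "lfp_approximant le f (L (fst ` R))"
    by (rule lfp_approximant_lub[OF assms(1)]) (use lub.IH in auto)
  then show ?case by simp
qed

lemma least_fp_joint_iterates:
  fixes g :: "'a \<Rightarrow> 'a"
  assumes "monotone le le f"
  defines "a \<equiv> L (fst ` joint_iterates f g L)"
  shows "least_fp le f = a" and "lfp_approximant le f a" and "le (f a) a"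
proof -
  let ?J = "joint_iterates f g L"
  have top: "(a, L (snd ` ?J)) \<in> ?J" unfolding a_def by (rule joint_iterates.lub) blast
  then show approx: "lfp_approximant le f a"
    using joint_iterates_lfp_approximant[OF assms(1)] by fastforce
  from top have "(f a, g (L (snd ` ?J))) \<in> ?J" by (rule joint_iterates.step)
  then have "f a \<in> fst ` ?J" by (metis fst_conv imageI)
  then show pre: "le (f a) a"
    using L_lub[of "fst ` ?J"] unfolding a_def is_lub_def by blast
  show "least_fp le f = a" using least_fp_eqI[OF po approx pre] .
qed

lemma least_fp_unfold:
  assumes "monotone le le f"
  shows "f (least_fp le f) = least_fp le f"
  using least_fp_joint_iterates[OF assms, of f] partial_order_rel_antisym[OF po]
  unfolding lfp_approximant_def by metis

lemma least_fp_lowerbound: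
  assumes "monotone le le f" and "le (f z) z"
  shows "le (least_fp le f) z"
  using least_fp_joint_iterates[OF assms(1), of f] assms(2)
  unfolding lfp_approximant_def by metis

lemma least_fp_transfer:
  assumes "monotone le le f" and "monotone le le g"
    and k_step: "\<And>x y. k x y \<Longrightarrow> k (f x) (g y)" and k_lub: "mono_fam k L"
  shows "k (least_fp le f) (least_fp le g)"
proof -
  let ?J = "joint_iterates f g L"
  have "k (fst p) (snd p)" if "p \<in> ?J" for p
    using that
  proof (induction rule: joint_iterates.induct)
    case (step x y)
    then show ?case using k_step by simp
  next
    case (lub R)
    then show ?case using k_lub unfolding mono_fam_def by fastforce
  qed
  moreover have "(L (fst ` ?J), L (snd ` ?J)) \<in> ?J" by (rule joint_iterates.lub) blast
  ultimately have "k (L (fst ` ?J)) (L (snd ` ?J))" by fastforce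
  moreover have "least_fp le f = L (fst ` ?J)"
    using least_fp_joint_iterates(1)[OF assms(1)] .
  moreover have "least_fp le g = L (snd ` ?J)"
    using least_fp_joint_iterates(1)[OF assms(2)] by (simp add: snd_image_joint_iterates)
  ultimately show ?thesis by simp
qed

end

text \<open>Each Psi' is a least fixpoint for this order (greatest fixpoints being least ones for the
  converse order), and fixpoint_join is the corresponding lub.\<close>
definition fixpoint_order :: "'b bilattice \<Rightarrow> tval \<Rightarrow> 'b \<Rightarrow> 'b \<Rightarrow> bool" where
  "fixpoint_order B \<alpha> = (case \<alpha> of
       CF \<Rightarrow> tle B | CT \<Rightarrow> (\<lambda>x y. tle B y x) | CU \<Rightarrow> kle B | CI \<Rightarrow> (\<lambda>x y. kle B y x))"

definition fixpoint_join :: "'b bilattice \<Rightarrow> tval \<Rightarrow> 'b set \<Rightarrow> 'b" where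
  "fixpoint_join B \<alpha> = (case \<alpha> of CF \<Rightarrow> tJoin B | CT \<Rightarrow> tMeet B | CU \<Rightarrow> kJoin B | CI \<Rightarrow> kMeet B)"

lemma Psi'_eq_least_fp:
  "Psi' B P \<alpha> v = least_fp (vle (fixpoint_order B \<alpha>)) (\<lambda>x. Psi B P \<alpha> x v)"
  by (cases \<alpha>) (simp_all add: Psi'_def fixpoint_order_def greatest_fp_eq_least_fp_converse
      vle_converse[of "tle B"] vle_converse[of "kle B"])

lemma Psi_mono:
  assumes "\<And>e \<phi>. r (ceval B v w e \<phi>) (ceval B v' w' e \<phi>)" and "\<And>x. r x x"
  shows "vle r (Psi B P \<alpha> v w) (Psi B P \<alpha> v' w')"
  unfolding vle_def Psi_def using assms by (auto simp: split_def Let_def)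

locale standard_bilattice =
  fixes B :: "'b bilattice"
  assumes std_bilattice: "std_bilattice B"
begin

lemma complete_tle: "complete_lattice_rel (tle B)"
  and complete_kle: "complete_lattice_rel (kle B)"
  and negation: "is_negation B"
  and interlaced: "infinitely_interlaced B"
  using std_bilattice unfolding std_bilattice_def by blast+

lemma partial_order_tle: "partial_order_rel (tle B)"
  and partial_order_kle: "partial_order_rel (kle B)"
  using complete_tle complete_kle unfolding complete_lattice_rel_def by blast+

lemma mono_fam_tle: "mono_fam (tle B) (tMeet B)" "mono_fam (tle B) (tJoin B)"
    "mono_fam (tle B) (kMeet B)" "mono_fam (tle B) (kJoin B)"
  and mono_fam_kle: "mono_fam (kle B) (tMeet B)" "mono_fam (kle B) (tJoin B)"
    "mono_fam (kle B) (kMeet B)" "mono_fam (kle B) (kJoin B)"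
  using interlaced unfolding infinitely_interlaced_def by blast+

lemma kle_bU: "kle B (bU B) x"
  using complete_lattice_rel_is_lub[OF complete_kle, of "{}"]
  unfolding bU_def kJoin_def is_lub_def by blast

lemma is_lub_kJoin: "is_lub (kle B) S (kJoin B S)"
  unfolding kJoin_def by (rule complete_lattice_rel_is_lub[OF complete_kle])

lemma kle_kmeetI: "kle B x a \<Longrightarrow> kle B x b \<Longrightarrow> kle B x (kmeet B a b)"
  using complete_lattice_rel_is_glb[OF complete_kle, of "{a, b}"]
  unfolding kmeet_def kMeet_def is_glb_def by blast

lemma ceval_kmono:
  "vle (kle B) v v' \<Longrightarrow> vle (kle B) w w' \<Longrightarrow> kle B (ceval B v w e \<phi>) (ceval B v' w' e \<phi>)"
proof (induction \<phi> arbitrary: e)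
  case (NegLit p ts)
  then show ?case using negation unfolding is_negation_def vle_def by simp
next
  case (Conj a b) then show ?case using mono_fam_pair[OF mono_fam_kle(1)] by (simp add: tmeet_def)
next
  case (Disj a b) then show ?case using mono_fam_pair[OF mono_fam_kle(2)] by (simp add: tjoin_def)
next
  case (KMeetF a b) then show ?case using mono_fam_pair[OF mono_fam_kle(3)] by (simp add: kmeet_def)
next
  case (KJoinF a b) then show ?case using mono_fam_pair[OF mono_fam_kle(4)] by (simp add: kjoin_def)
next
  case (Ex x a) then show ?case by (simp, intro mono_fam_image[OF mono_fam_kle(2)]) auto
next
  case (All x a) then show ?case by (simp, intro mono_fam_image[OF mono_fam_kle(1)]) auto
qed (auto simp: vle_def partial_order_rel_refl[OF partial_order_kle])

lemma ceval_tmono: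
  "vle (tle B) v v' \<Longrightarrow> tle B (ceval B v w e \<phi>) (ceval B v' w e \<phi>)"
proof (induction \<phi> arbitrary: e)
  case (Conj a b) then show ?case using mono_fam_pair[OF mono_fam_tle(1)] by (simp add: tmeet_def)
next
  case (Disj a b) then show ?case using mono_fam_pair[OF mono_fam_tle(2)] by (simp add: tjoin_def)
next
  case (KMeetF a b) then show ?case using mono_fam_pair[OF mono_fam_tle(3)] by (simp add: kmeet_def)
next
  case (KJoinF a b) then show ?case using mono_fam_pair[OF mono_fam_tle(4)] by (simp add: kjoin_def)
next
  case (Ex x a) then show ?case by (simp, intro mono_fam_image[OF mono_fam_tle(2)]) auto
next
  case (All x a) then show ?case by (simp, intro mono_fam_image[OF mono_fam_tle(1)]) auto
qed (auto simp: vle_def partial_order_rel_refl[OF partial_order_tle])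

lemma Psi_kmono:
  "vle (kle B) v v' \<Longrightarrow> vle (kle B) w w' \<Longrightarrow> vle (kle B) (Psi B P \<alpha> v w) (Psi B P \<alpha> v' w')"
  by (rule Psi_mono) (use ceval_kmono partial_order_rel_refl[OF partial_order_kle] in auto)

lemma Psi_tmono: "vle (tle B) v v' \<Longrightarrow> vle (tle B) (Psi B P \<alpha> v w) (Psi B P \<alpha> v' w)"
  by (rule Psi_mono) (use ceval_tmono partial_order_rel_refl[OF partial_order_tle] in auto)

lemma Psi_CU_kle: "vle (kle B) (Psi B P CU v w) (Psi B P \<alpha> v w)"
  unfolding vle_def Psi_def
  by (auto simp: tval_of_def kle_bU partial_order_rel_refl[OF partial_order_kle])

lemma partial_order_fixpoint_order: "partial_order_rel (fixpoint_order B \<alpha>)"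
  by (cases \<alpha>) (simp_all add: fixpoint_order_def partial_order_tle partial_order_kle
      partial_order_rel_converse)

lemma is_lub_fixpoint_join: "is_lub (fixpoint_order B \<alpha>) S (fixpoint_join B \<alpha> S)"
  by (cases \<alpha>) (simp_all add: fixpoint_order_def fixpoint_join_def
      is_lub_converse[of "tle B"] is_lub_converse[of "kle B"]
      tJoin_def tMeet_def kJoin_def kMeet_def complete_lattice_rel_is_lub complete_lattice_rel_is_glb
      complete_tle complete_kle)

lemma mono_fam_kle_fixpoint_join: "mono_fam (kle B) (fixpoint_join B \<alpha>)"
  by (cases \<alpha>) (simp_all add: fixpoint_join_def mono_fam_kle)

lemma vle_kle_refl: "vle (kle B) v v"
  using partial_order_rel_refl[OF partial_order_rel_vle[OF partial_order_kle]] .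

lemma Psi_mono_fixpoint_order:
  "monotone (vle (fixpoint_order B \<alpha>)) (vle (fixpoint_order B \<alpha>)) (\<lambda>x. Psi B P \<alpha> x v)"
proof (cases \<alpha>)
  case CF then show ?thesis by (simp add: fixpoint_order_def monotone_def Psi_tmono)
next
  case CT then show ?thesis
    by (simp add: fixpoint_order_def monotone_def vle_converse[of "tle B"] Psi_tmono)
next
  case CU then show ?thesis
    by (simp add: fixpoint_order_def monotone_def Psi_kmono vle_kle_refl)
next
  case CI then show ?thesis
    by (simp add: fixpoint_order_def monotone_def vle_converse[of "kle B"] Psi_kmono vle_kle_refl)
qed

lemma Psi'_fixpoint: "Psi B P \<alpha> (Psi' B P \<alpha> v) v = Psi' B P \<alpha> v"
  unfolding Psi'_eq_least_fp
  by (rule least_fp_unfold[OF partial_order_rel_vle[OF partial_order_fixpoint_order]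
        is_lub_pointwise[OF is_lub_fixpoint_join] Psi_mono_fixpoint_order])

lemma Psi'_lowerbound:
  "vle (fixpoint_order B \<alpha>) (Psi B P \<alpha> z v) z \<Longrightarrow> vle (fixpoint_order B \<alpha>) (Psi' B P \<alpha> v) z"
  unfolding Psi'_eq_least_fp
  by (rule least_fp_lowerbound[OF partial_order_rel_vle[OF partial_order_fixpoint_order]
        is_lub_pointwise[OF is_lub_fixpoint_join] Psi_mono_fixpoint_order])

lemma Psi'_kmono: "monotone (vle (kle B)) (vle (kle B)) (Psi' B P \<alpha>)"
  unfolding Psi'_eq_least_fp
  by (intro monotoneI least_fp_transfer[OF partial_order_rel_vle[OF partial_order_fixpoint_order]
        is_lub_pointwise[OF is_lub_fixpoint_join] Psi_mono_fixpoint_order Psi_mono_fixpoint_order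
        _ mono_fam_pointwise[OF mono_fam_kle_fixpoint_join]] Psi_kmono)

lemma FixU_fixpoint: "Psi' B P \<alpha> (FixU B P \<alpha>) = FixU B P \<alpha>"
  unfolding FixU_def
  by (rule least_fp_unfold[OF partial_order_rel_vle[OF partial_order_kle]
        is_lub_pointwise[OF is_lub_kJoin] Psi'_kmono])

lemma FixU_lowerbound: "vle (kle B) (Psi' B P \<alpha> z) z \<Longrightarrow> vle (kle B) (FixU B P \<alpha>) z"
  unfolding FixU_def
  by (rule least_fp_lowerbound[OF partial_order_rel_vle[OF partial_order_kle]
        is_lub_pointwise[OF is_lub_kJoin] Psi'_kmono])

lemma FixU_CU_kle: "vle (kle B) (FixU B P CU) (FixU B P \<alpha>)"
proof -
  let ?\<Phi> = "FixU B P \<alpha>"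
  have "Psi B P \<alpha> ?\<Phi> ?\<Phi> = ?\<Phi>"
    using Psi'_fixpoint[of P \<alpha> ?\<Phi>] FixU_fixpoint[of P \<alpha>] by simp
  then have "vle (kle B) (Psi B P CU ?\<Phi> ?\<Phi>) ?\<Phi>"
    using Psi_CU_kle[of P ?\<Phi> ?\<Phi> \<alpha>] by simp
  then have "vle (kle B) (Psi' B P CU ?\<Phi>) ?\<Phi>"
    using Psi'_lowerbound[of CU P ?\<Phi>] by (simp add: fixpoint_order_def)
  then show ?thesis by (rule FixU_lowerbound)
qed

end

theorem corollary1:
  fixes B :: "'b bilattice" and P :: "('p, 'f, 'b) clause set"
  assumes "std_bilattice B" and "fitting_program P"
  shows "vle (kle B) (FixU B P CU) (\<lambda>A. kmeet B (FixU B P CF A) (FixU B P CT A))"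
proof -
  interpret standard_bilattice B by (rule standard_bilattice.intro) (fact assms(1))
  show ?thesis
    using FixU_CU_kle[of P CF] FixU_CU_kle[of P CT] by (simp add: vle_def kle_kmeetI)
qed

end
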